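(* Let $G$ be a group, $\mathbb{F}$ a field, and $\alpha,\beta$ non-zero elements of $\mathbb{F}[G]$ with $|supp(\alpha)|=n$ and $\alpha\beta=0$. Then every vertex of $Z(\alpha,\beta)$ has degree in $\{n,n+1,\dots,n(n-1)\}$. Moreover, if $\mathbb{F}=\mathbb{F}_2$, then the degrees of all vertices of $Z(\alpha,\beta)$ are even when $n$ is even and odd when $n$ is odd.
   Context: $supp(\gamma)=\{x\in G:\gamma_x\ne0\}$. The zero-divisor graph $Z(\alpha,\beta)$ (for $\alpha\beta=0$) is the multigraph with vertex set $supp(\beta)$ whose edges are the sets $\{(h,h',g,g'),(h',h,g',g)\}$ with $h,h'\in supp(\alpha)$, $g,g'\in supp(\beta)$, $g\ne g'$, $hg=h'g'$; such an edge joins $g$ and $g'$. The degree of a vertex is the number of edges incident to it. *)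

theory Defs
  imports "HOL-Algebra.Group"
begin

text \<open>Elements of the group algebra F[G] are functions from the carrier of G to the
field F with finite support contained in the carrier.\<close>

definition supp :: "('g \<Rightarrow> 'f::zero) \<Rightarrow> 'g set" where
  "supp \<gamma> = {x. \<gamma> x \<noteq> 0}"

definition group_ring_elem :: "('g, 'b) monoid_scheme \<Rightarrow> ('g \<Rightarrow> 'f::zero) \<Rightarrow> bool" where
  "group_ring_elem G \<gamma> \<longleftrightarrow> supp \<gamma> \<subseteq> carrier G \<and> finite (supp \<gamma>)"

definition gr_mult :: "('g, 'b) monoid_scheme \<Rightarrow> ('g \<Rightarrow> 'f::comm_ring_1) \<Rightarrow> ('g \<Rightarrow> 'f) \<Rightarrow> 'g \<Rightarrow> 'f" where
  "gr_mult G \<alpha> \<beta> x =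
     (\<Sum>p\<in>{(h, g). h \<in> supp \<alpha> \<and> g \<in> supp \<beta> \<and> h \<otimes>\<^bsub>G\<^esub> g = x}. \<alpha> (fst p) * \<beta> (snd p))"

definition zd_edges :: "('g, 'b) monoid_scheme \<Rightarrow> ('g \<Rightarrow> 'f::zero) \<Rightarrow> ('g \<Rightarrow> 'f)
    \<Rightarrow> ('g \<times> 'g \<times> 'g \<times> 'g) set set" where
  "zd_edges G \<alpha> \<beta> = {{(h, h', g, g'), (h', h, g', g)} | h h' g g'.
      h \<in> supp \<alpha> \<and> h' \<in> supp \<alpha> \<and> g \<in> supp \<beta> \<and> g' \<in> supp \<beta> \<and> g \<noteq> g' \<and>
      h \<otimes>\<^bsub>G\<^esub> g = h' \<otimes>\<^bsub>G\<^esub> g'}"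

text \<open>The edge {(h,h',g,g'),(h',h,g',g)} joins g and g'.\<close>
definition zd_incident :: "'g \<Rightarrow> ('g \<times> 'g \<times> 'g \<times> 'g) set \<Rightarrow> bool" where
  "zd_incident v e \<longleftrightarrow> (\<exists>h h' g'. (h, h', v, g') \<in> e)"

definition zd_degree :: "('g, 'b) monoid_scheme \<Rightarrow> ('g \<Rightarrow> 'f::zero) \<Rightarrow> ('g \<Rightarrow> 'f) \<Rightarrow> 'g \<Rightarrow> nat" where
  "zd_degree G \<alpha> \<beta> v = card {e \<in> zd_edges G \<alpha> \<beta>. zd_incident v e}"

end

(*
  Fix v \<in> supp \<beta>. An edge at v is given by h \<in> supp \<alpha> together with a partner (h', g'),
  where h' \<in> supp \<alpha>, g' \<in> supp \<beta> - {v} and h' g' = h v. The coefficient of h v in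
  \<alpha>\<beta> = 0 says that \<alpha>_h \<beta>_v is minus the sum of \<alpha>_h' \<beta>_g' over the partners of h.
  As \<alpha>_h \<beta>_v \<noteq> 0, h has a partner; as h' determines g' and h' \<noteq> h, it has at most
  n - 1 of them. Over F_2 all these products are 1, so each h has an odd number of
  partners, and the degree, a sum of n odd numbers, has the parity of n.
*)
theory Submission
  imports Defs "HOL-Number_Theory.Residues"
begin

lemma UNIV_eq_zero_one_if_card_UNIV_2:
  assumes "card (UNIV :: 'a::zero_neq_one set) = 2"
  shows "(UNIV :: 'a set) = {0, 1}"
proof (rule card_subset_eq[symmetric])
  show "finite (UNIV :: 'a set)" using assms card.infinite by fastforce
qed (use assms in simp_all)

lemma CHAR_eq_2_if_card_UNIV_2:
  assumes "card (UNIV :: 'a::ring_1 set) = 2"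
  shows "CHAR('a) = 2"
proof -
  have "CHAR('a) dvd 2" using CHAR_dvd_CARD[where 'a = 'a] assms by simp
  then have "0 < CHAR('a)" and "CHAR('a) \<le> 2"
    by (metis dvd_0_left_iff gr0I zero_neq_numeral, simp add: dvd_imp_le)
  moreover have "CHAR('a) \<noteq> 1" by simp
  ultimately show ?thesis by linarith
qed

lemma of_nat_eq_0_iff_even_if_card_UNIV_2:
  assumes "card (UNIV :: 'a::ring_1 set) = 2"
  shows "(of_nat k :: 'a) = 0 \<longleftrightarrow> even k"
  using CHAR_eq_2_if_card_UNIV_2[OF assms] by (simp add: of_nat_eq_0_iff_char_dvd)

definition zd_partners :: "('g, 'b) monoid_scheme \<Rightarrow> ('g \<Rightarrow> 'f::zero) \<Rightarrow> ('g \<Rightarrow> 'f)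
    \<Rightarrow> 'g \<Rightarrow> 'g \<Rightarrow> ('g \<times> 'g) set" where
  "zd_partners G \<alpha> \<beta> v h = {(h', g'). h' \<in> supp \<alpha> \<and> g' \<in> supp \<beta> \<and> g' \<noteq> v \<and>
      h' \<otimes>\<^bsub>G\<^esub> g' = h \<otimes>\<^bsub>G\<^esub> v}"

lemma finite_zd_partners:
  assumes "finite (supp \<alpha>)" and "finite (supp \<beta>)"
  shows "finite (zd_partners G \<alpha> \<beta> v h)"
  by (rule finite_subset[of _ "supp \<alpha> \<times> supp \<beta>"]) (use assms in \<open>auto simp: zd_partners_def\<close>)

lemma zd_degree_eq_sum_card_zd_partners:
  fixes G :: "('g, 'b) monoid_scheme" and \<alpha> \<beta> :: "'g \<Rightarrow> 'f::zero"
  assumes "finite (supp \<alpha>)" and "finite (supp \<beta>)" and "v \<in> supp \<beta>"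
  shows "zd_degree G \<alpha> \<beta> v = (\<Sum>h\<in>supp \<alpha>. card (zd_partners G \<alpha> \<beta> v h))"
proof -
  define edge :: "'g \<times> 'g \<times> 'g \<Rightarrow> ('g \<times> 'g \<times> 'g \<times> 'g) set"
    where "edge = (\<lambda>(h, h', g'). {(h, h', v, g'), (h', h, g', v)})"
  define T where "T = (SIGMA h:supp \<alpha>. zd_partners G \<alpha> \<beta> v h)"
  have "inj_on edge T"
  proof (rule inj_onI)
    fix x y assume "x \<in> T" "y \<in> T" "edge x = edge y"
    then show "x = y"
      unfolding T_def edge_def zd_partners_def by (auto simp: doubleton_eq_iff)
  qed
  moreover have "edge ` T = {e \<in> zd_edges G \<alpha> \<beta>. zd_incident v e}"
  proof (intro equalityI subsetI)
    fix e assume "e \<in> edge ` T"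
    then show "e \<in> {e \<in> zd_edges G \<alpha> \<beta>. zd_incident v e}"
      using assms(3) unfolding T_def edge_def zd_partners_def zd_edges_def zd_incident_def
      by fastforce
  next
    fix e assume "e \<in> {e \<in> zd_edges G \<alpha> \<beta>. zd_incident v e}"
    then obtain h h' g g' a b c where
      e: "e = {(h, h', g, g'), (h', h, g', g)}" and
      factors: "h \<in> supp \<alpha>" "h' \<in> supp \<alpha>" "g \<in> supp \<beta>" "g' \<in> supp \<beta>" "g \<noteq> g'"
        "h \<otimes>\<^bsub>G\<^esub> g = h' \<otimes>\<^bsub>G\<^esub> g'" and
      "(a, b, v, c) \<in> e"
      unfolding zd_edges_def zd_incident_def by blast
    then have "g = v \<or> g' = v" by auto
    then show "e \<in> edge ` T"
    proof
      assume "g = v"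
      then have "(h, h', g') \<in> T" and "e = edge (h, h', g')"
        using e factors by (auto simp: T_def edge_def zd_partners_def)
      then show ?thesis by blast
    next
      assume "g' = v"
      then have "(h', h, g) \<in> T" and "e = edge (h', h, g)"
        using e factors by (auto simp: T_def edge_def zd_partners_def)
      then show ?thesis by blast
    qed
  qed
  ultimately have "zd_degree G \<alpha> \<beta> v = card T"
    unfolding zd_degree_def by (metis card_image)
  also have "\<dots> = (\<Sum>h\<in>supp \<alpha>. card (zd_partners G \<alpha> \<beta> v h))"
    unfolding T_def using assms by (simp add: card_SigmaI finite_zd_partners)
  finally show ?thesis .
qed

locale zero_divisor_pair = group G
  for G :: "('g, 'b) monoid_scheme" (structure) +
  fixes \<alpha> \<beta> :: "'g \<Rightarrow> 'f::idom"
  assumes group_ring_elem_\<alpha>: "group_ring_elem G \<alpha>"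
    and group_ring_elem_\<beta>: "group_ring_elem G \<beta>"
    and gr_mult_eq_0: "\<forall>x \<in> carrier G. gr_mult G \<alpha> \<beta> x = 0"
begin

lemma supp_\<alpha>_subset: "supp \<alpha> \<subseteq> carrier G" and finite_supp_\<alpha>: "finite (supp \<alpha>)"
  using group_ring_elem_\<alpha> by (auto simp: group_ring_elem_def)

lemma supp_\<beta>_subset: "supp \<beta> \<subseteq> carrier G" and finite_supp_\<beta>: "finite (supp \<beta>)"
  using group_ring_elem_\<beta> by (auto simp: group_ring_elem_def)

lemma factorisations_eq_insert_zd_partners:
  assumes "h \<in> supp \<alpha>" and "v \<in> supp \<beta>"
  shows "{(h', g'). h' \<in> supp \<alpha> \<and> g' \<in> supp \<beta> \<and> h' \<otimes> g' = h \<otimes> v}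
    = insert (h, v) (zd_partners G \<alpha> \<beta> v h)"
proof -
  have "h' = h" if "h' \<in> supp \<alpha>" and "h' \<otimes> v = h \<otimes> v" for h'
    using that assms supp_\<alpha>_subset supp_\<beta>_subset by (auto simp: subset_iff)
  then show ?thesis
    using assms by (auto simp: zd_partners_def)
qed

lemma sum_zd_partners_eq:
  assumes "h \<in> supp \<alpha>" and "v \<in> supp \<beta>"
  shows "(\<Sum>p\<in>zd_partners G \<alpha> \<beta> v h. \<alpha> (fst p) * \<beta> (snd p)) = - (\<alpha> h * \<beta> v)"
proof -
  have "h \<otimes> v \<in> carrier G"
    using assms supp_\<alpha>_subset supp_\<beta>_subset by auto
  then have "0 = gr_mult G \<alpha> \<beta> (h \<otimes> v)"
    using gr_mult_eq_0 by simp
  also have "\<dots> = \<alpha> h * \<beta> v + (\<Sum>p\<in>zd_partners G \<alpha> \<beta> v h. \<alpha> (fst p) * \<beta> (snd p))"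
    unfolding gr_mult_def factorisations_eq_insert_zd_partners[OF assms]
    using finite_zd_partners[OF finite_supp_\<alpha> finite_supp_\<beta>]
    by (subst sum.insert) (auto simp: zd_partners_def)
  finally show ?thesis
    by (simp add: eq_neg_iff_add_eq_0 add.commute)
qed

lemma zd_partners_nonempty:
  assumes "h \<in> supp \<alpha>" and "v \<in> supp \<beta>"
  shows "zd_partners G \<alpha> \<beta> v h \<noteq> {}"
proof
  assume "zd_partners G \<alpha> \<beta> v h = {}"
  then have "\<alpha> h * \<beta> v = 0"
    using sum_zd_partners_eq[OF assms] by simp
  then show False
    using assms by (simp add: supp_def)
qed

lemma card_zd_partners_le:
  assumes "h \<in> supp \<alpha>" and "v \<in> supp \<beta>"
  shows "card (zd_partners G \<alpha> \<beta> v h) \<le> card (supp \<alpha>) - 1"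
proof -
  have cancel: "g = g'" if "h' \<in> supp \<alpha>" "g \<in> supp \<beta>" "g' \<in> supp \<beta>" "h' \<otimes> g = h' \<otimes> g'"
    for h' g g'
    using that supp_\<alpha>_subset supp_\<beta>_subset by (auto simp: subset_iff)
  have "inj_on fst (zd_partners G \<alpha> \<beta> v h)"
    by (rule inj_onI) (auto simp: zd_partners_def dest: cancel)
  moreover have "fst ` zd_partners G \<alpha> \<beta> v h \<subseteq> supp \<alpha> - {h}"
    using assms by (auto simp: zd_partners_def dest: cancel)
  ultimately have "card (zd_partners G \<alpha> \<beta> v h) \<le> card (supp \<alpha> - {h})"
    using card_inj_on_le finite_supp_\<alpha> by blast
  then show ?thesis
    using assms by simp
qed

lemma odd_card_zd_partners:
  assumes "card (UNIV :: 'f set) = 2" and "h \<in> supp \<alpha>" and "v \<in> supp \<beta>"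
  shows "odd (card (zd_partners G \<alpha> \<beta> v h))"
proof -
  have one: "x = 1" if "x \<noteq> 0" for x :: 'f
    using that UNIV_eq_zero_one_if_card_UNIV_2[OF assms(1)] by blast
  have "(\<Sum>p\<in>zd_partners G \<alpha> \<beta> v h. \<alpha> (fst p) * \<beta> (snd p)) = (\<Sum>p\<in>zd_partners G \<alpha> \<beta> v h. 1)"
    by (rule sum.cong) (auto simp: zd_partners_def supp_def one)
  then have "of_nat (card (zd_partners G \<alpha> \<beta> v h)) = (- 1 :: 'f)"
    using sum_zd_partners_eq[OF assms(2,3)] assms(2,3) one[of "\<alpha> h"] one[of "\<beta> v"]
    by (simp add: supp_def)
  then have "(of_nat (Suc (card (zd_partners G \<alpha> \<beta> v h))) :: 'f) = 0"
    by simp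
  then show ?thesis
    using of_nat_eq_0_iff_even_if_card_UNIV_2[OF assms(1), of "Suc (card (zd_partners G \<alpha> \<beta> v h))"]
    by simp
qed

lemmas zd_degree_eq_sum = zd_degree_eq_sum_card_zd_partners[OF finite_supp_\<alpha> finite_supp_\<beta>]

lemma card_supp_\<alpha>_le_zd_degree:
  assumes "v \<in> supp \<beta>"
  shows "card (supp \<alpha>) \<le> zd_degree G \<alpha> \<beta> v"
proof -
  have "card (supp \<alpha>) = (\<Sum>h\<in>supp \<alpha>. 1)"
    by simp
  also have "\<dots> \<le> (\<Sum>h\<in>supp \<alpha>. card (zd_partners G \<alpha> \<beta> v h))"
  proof (rule sum_mono)
    fix h assume "h \<in> supp \<alpha>"
    then show "1 \<le> card (zd_partners G \<alpha> \<beta> v h)"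
      using zd_partners_nonempty[OF _ assms] finite_zd_partners[OF finite_supp_\<alpha> finite_supp_\<beta>]
      by (simp add: Suc_le_eq card_gt_0_iff)
  qed
  finally show ?thesis
    unfolding zd_degree_eq_sum[OF assms] .
qed

lemma zd_degree_le:
  assumes "v \<in> supp \<beta>"
  shows "zd_degree G \<alpha> \<beta> v \<le> card (supp \<alpha>) * (card (supp \<alpha>) - 1)"
  unfolding zd_degree_eq_sum[OF assms]
  using sum_mono[of "supp \<alpha>" _ "\<lambda>_. card (supp \<alpha>) - 1"] card_zd_partners_le[OF _ assms]
  by fastforce

lemma even_zd_degree_iff:
  assumes "card (UNIV :: 'f set) = 2" and "v \<in> supp \<beta>"
  shows "even (zd_degree G \<alpha> \<beta> v) \<longleftrightarrow> even (card (supp \<alpha>))"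
proof -
  have all_odd: "{h \<in> supp \<alpha>. odd (card (zd_partners G \<alpha> \<beta> v h))} = supp \<alpha>"
    using odd_card_zd_partners[OF assms(1) _ assms(2)] by blast
  show ?thesis
    by (simp only: zd_degree_eq_sum[OF assms(2)] even_sum_iff[OF finite_supp_\<alpha>] all_odd)
qed

end

theorem mainTheorem8:
  fixes G :: "('g, 'b) monoid_scheme"
    and \<alpha> \<beta> :: "'g \<Rightarrow> 'f::field"
    and n :: nat
  assumes "group G"
    and "group_ring_elem G \<alpha>" and "group_ring_elem G \<beta>"
    and "\<alpha> \<noteq> (\<lambda>_. 0)" and "\<beta> \<noteq> (\<lambda>_. 0)"
    and "card (supp \<alpha>) = n"
    and "\<forall>x \<in> carrier G. gr_mult G \<alpha> \<beta> x = 0"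
  shows "(\<forall>v \<in> supp \<beta>. zd_degree G \<alpha> \<beta> v \<in> {n..n * (n - 1)})
       \<and> (card (UNIV :: 'f set) = 2 \<longrightarrow> (\<forall>v \<in> supp \<beta>. (even (zd_degree G \<alpha> \<beta> v) \<longleftrightarrow> even n)))"
proof -
  interpret zero_divisor_pair G \<alpha> \<beta>
    by (rule zero_divisor_pair.intro) (use assms in \<open>simp_all add: zero_divisor_pair_axioms_def\<close>)
  show ?thesis
    using card_supp_\<alpha>_le_zd_degree zd_degree_le even_zd_degree_iff assms(6) by auto
qed

end
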